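(* Assume $H$ is non-degenerate, i.e. $\lambda_N < \lambda_{N+1}$, and denote by $P_{\infty,\infty}$ the minimizer of $\min_{P} \operatorname{tr}(HP)$ subject to $\operatorname{tr} P = N$, $P = P^{\mathrm{T}}$, $0 \preceq P \preceq I$. Let $P_{\infty,\eta}$ be any minimizer of $\min_{P} \operatorname{tr}(HP) + \frac{1}{\eta}\|P\|_1$ subject to the same constraints. Then (a) $0 \le \mathcal{E}_{\infty,\infty}(P_{\infty,\eta}) - \mathcal{E}_{\infty,\infty}(P_{\infty,\infty}) \le \frac{1}{\eta}\|P_{\infty,\infty}\|_1$; (b) $\|P_{\infty,\eta} - P_{\infty,\infty}\|_F^2 \le \frac{2}{\eta}\frac{\|P_{\infty,\infty}\|_1}{\lambda_{N+1}-\lambda_N}$. In particular, $\lim_{\eta\to\infty}\mathcal{E}_{\infty,\infty}(P_{\infty,\eta}) = \mathcal{E}_{\infty,\infty}(P_{\infty,\infty})$ and $\lim_{\eta\to\infty}\|P_{\infty,\eta} - P_{\infty,\infty}\|_F = 0$.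
   Context: $H$ is an $n\times n$ real symmetric matrix (discrete Hamiltonian) with eigenpairs $\{\lambda_i,\phi_i\}_{i=1}^n$, eigenvalues ordered increasingly; $N$ is a positive integer (number of electrons). $\|P\|_1 = \sum_{i,j}|p_{ij}|$ denotes the entrywise $\ell_1$ norm of a matrix, $\|\cdot\|_F$ the Frobenius norm, and $A\preceq B$ means $B-A$ is symmetric positive semidefinite. The energy is $\mathcal{E}_{\infty,\infty}(P) = \operatorname{tr}(HP)$, and $\eta>0$ is the $\ell_1$ penalty parameter. The zero temperature minimizer is $P_{\infty,\infty} = \sum_{i=1}^N \phi_i\phi_i^{\mathrm{T}}$. *)

theory Defs
  imports "HOL-Analysis.Analysis"
begin

definition sym_mat :: "real^'n^'n \<Rightarrow> bool" where
  "sym_mat A \<longleftrightarrow> transpose A = A"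

definition loewner_le :: "real^'n^'n \<Rightarrow> real^'n^'n \<Rightarrow> bool" where
  "loewner_le A B \<longleftrightarrow> sym_mat (B - A) \<and> (\<forall>x. 0 \<le> x \<bullet> ((B - A) *v x))"

definition l1_norm :: "real^'n^'n \<Rightarrow> real" where
  "l1_norm P = (\<Sum>i\<in>UNIV. \<Sum>j\<in>UNIV. \<bar>P $ i $ j\<bar>)"

definition frob_norm :: "real^'n^'n \<Rightarrow> real" where
  "frob_norm P = sqrt (\<Sum>i\<in>UNIV. \<Sum>j\<in>UNIV. (P $ i $ j)^2)"

definition outer :: "real^'n \<Rightarrow> real^'n \<Rightarrow> real^'n^'n" where
  "outer u v = (\<chi> i j. u $ i * v $ j)"

definition feasible :: "nat \<Rightarrow> real^'n^'n \<Rightarrow> bool" where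
  "feasible N P \<longleftrightarrow> trace P = real N \<and> sym_mat P \<and> loewner_le 0 P \<and> loewner_le P (mat 1)"

definition energy :: "real^'n^'n \<Rightarrow> real^'n^'n \<Rightarrow> real" where
  "energy H P = trace (H ** P)"

definition is_l1_minimizer :: "real^'n^'n \<Rightarrow> nat \<Rightarrow> real \<Rightarrow> real^'n^'n \<Rightarrow> bool" where
  "is_l1_minimizer H N \<eta> P \<longleftrightarrow> feasible N P \<and>
     (\<forall>Q. feasible N Q \<longrightarrow> energy H P + l1_norm P / \<eta> \<le> energy H Q + l1_norm Q / \<eta>)"

end

theory Submission
  imports Defs
begin

text \<open>
  For a feasible P write \<open>d i = \<phi> i \<bullet> P \<phi> i\<close>. The constraints give \<open>0 \<le> d i \<le> 1\<close> and
  \<open>\<Sum> d i = N\<close>, so the missing occupation \<open>s = (\<Sum>i\<le>N. 1 - d i)\<close> equals the excess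
  occupation \<open>(\<Sum>i>N. d i)\<close>. As \<open>E(P) = \<Sum> \<lambda> i * d i\<close>, shifting weight s across the
  spectral gap costs at least \<open>(\<lambda> (N+1) - \<lambda> N) * s\<close> energy, while \<open>P\<^sup>2 \<preceq> P\<close> bounds the
  squared Frobenius distance to the spectral projector by 2s. Comparing the penalized
  functional at both minimizers bounds the energy excess by the \<open>\<ell>\<^sub>1\<close> norm of the projector
  over \<open>\<eta>\<close>, and hence s by that over the gap.
\<close>

lemma sym_mat_iff: "sym_mat A \<longleftrightarrow> (\<forall>i j. A $ i $ j = A $ j $ i)"
  unfolding sym_mat_def transpose_def vec_eq_iff by auto

lemma sym_mat_inner_commute:
  assumes "sym_mat M"
  shows "(M *v x) \<bullet> y = x \<bullet> (M *v y)"
  using assms unfolding sym_mat_def by (metis dot_lmul_matrix vector_transpose_matrix)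

lemma outer_mult_vec: "outer u v *v x = (v \<bullet> x) *\<^sub>R u"
  by (simp add: outer_def matrix_vector_mult_def vec_eq_iff inner_vec_def sum_distrib_left
      algebra_simps)

lemma sum_matrix_vector_mult: "(\<Sum>i\<in>A. M i) *v x = (\<Sum>i\<in>A. M i *v x)"
  by (induction A rule: infinite_finite_induct) (auto simp: matrix_vector_mult_add_rdistrib)

lemma sum_split_at:
  assumes "N \<le> n"
  shows "sum f {1..n} = sum f {1..N} + sum f {Suc N..n}"
proof -
  have "{1..n} = {1..N} \<union> {Suc N..n}" using assms by auto
  then show ?thesis by (simp add: sum.union_disjoint)
qed

lemma frob_norm_nonneg: "0 \<le> frob_norm P"
  by (simp add: frob_norm_def sum_nonneg)

lemma feasibleD:
  assumes "feasible N P"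
  shows "sym_mat P" "0 \<le> x \<bullet> (P *v x)" "x \<bullet> (P *v x) \<le> x \<bullet> x" "trace P = real N"
  using assms unfolding feasible_def loewner_le_def
  by (auto simp: matrix_vector_mult_diff_rdistrib inner_diff_right)

lemma feasible_inner_mult_vec_le:
  assumes "feasible N P"
  shows "(P *v x) \<bullet> (P *v x) \<le> x \<bullet> (P *v x)"
proof -
  note P = feasibleD[OF assms]
  let ?y = "P *v x"
  have sq: "?y \<bullet> ?y = x \<bullet> (P *v ?y)" by (rule sym_mat_inner_commute[OF P(1)])
  \<comment> \<open>\<open>0 \<preceq> P\<close> at \<open>x - P x\<close>, then \<open>P \<preceq> I\<close> at \<open>P x\<close>\<close>
  have "0 \<le> (x - ?y) \<bullet> (P *v (x - ?y))" by (rule P(2))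
  also have "\<dots> = x \<bullet> ?y - 2 * (?y \<bullet> ?y) + ?y \<bullet> (P *v ?y)"
    using sq by (simp add: matrix_vector_mult_diff_distrib inner_diff_left inner_diff_right
        inner_commute)
  also have "\<dots> \<le> x \<bullet> ?y - ?y \<bullet> ?y" using P(3)[of ?y] by simp
  finally show ?thesis by simp
qed

lemma l1_minimizer_energy_excess_le:
  assumes "is_l1_minimizer H N \<eta> P" "0 < \<eta>" "feasible N Q"
  shows "energy H P - energy H Q \<le> l1_norm Q / \<eta>"
proof -
  have "energy H P + l1_norm P / \<eta> \<le> energy H Q + l1_norm Q / \<eta>"
    using assms(1,3) unfolding is_l1_minimizer_def by blast
  moreover have "0 \<le> l1_norm P / \<eta>"
    using assms(2) unfolding l1_norm_def by (simp add: sum_nonneg)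
  ultimately show ?thesis by linarith
qed

lemma tendsto_zero_if_le_inverse:
  fixes f :: "real \<Rightarrow> real"
  assumes "\<And>\<eta>. 0 < \<eta> \<Longrightarrow> 0 \<le> f \<eta> \<and> f \<eta> \<le> C / \<eta>"
  shows "(f \<longlongrightarrow> 0) at_top"
proof (rule tendsto_sandwich[OF _ _ tendsto_const])
  show "eventually (\<lambda>\<eta>. 0 \<le> f \<eta>) at_top"
    using eventually_gt_at_top[of 0] by eventually_elim (use assms in blast)
  show "eventually (\<lambda>\<eta>. f \<eta> \<le> C / \<eta>) at_top"
    using eventually_gt_at_top[of 0] by eventually_elim (use assms in blast)
  show "((\<lambda>\<eta>. C / \<eta>) \<longlongrightarrow> 0) at_top"
    by (rule tendsto_divide_0[OF tendsto_const filterlim_at_top_imp_at_infinity[OF filterlim_ident]])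
qed

locale orthonormal_basis =
  fixes phi :: "nat \<Rightarrow> real^'n"
  assumes orthonormal: "\<And>i j. i \<in> {1..CARD('n)} \<Longrightarrow> j \<in> {1..CARD('n)} \<Longrightarrow>
                 phi i \<bullet> phi j = (if i = j then 1 else 0)"
begin

lemma basis_expansion: "(\<Sum>i\<in>{1..CARD('n)}. (phi i \<bullet> x) *\<^sub>R phi i) = x"
proof -
  let ?I = "{1..CARD('n)}"
  let ?B = "phi ` ?I"
  have inj: "inj_on phi ?I"
    by (rule inj_onI) (metis orthonormal zero_neq_one)
  have orth: "pairwise orthogonal ?B"
    unfolding pairwise_def orthogonal_def using orthonormal by auto
  have unit: "norm b = 1" if "b \<in> ?B" for b
    using that orthonormal by (auto simp: norm_eq_sqrt_inner)
  then have "independent ?B"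
    by (metis orth norm_zero zero_neq_one pairwise_orthogonal_independent)
  then have "span ?B = UNIV"
    using eucl.card_ge_dim_independent[of ?B UNIV] card_image[OF inj] by auto
  then have "(\<Sum>b\<in>?B. (x \<bullet> b) *\<^sub>R b) = x"
    using orthonormal_basis_expand[OF orth unit] by blast
  moreover have "(\<Sum>b\<in>?B. (x \<bullet> b) *\<^sub>R b) = (\<Sum>i\<in>?I. (phi i \<bullet> x) *\<^sub>R phi i)"
    unfolding sum.reindex[OF inj] o_def by (simp add: inner_commute)
  ultimately show ?thesis by simp
qed

lemma parseval: "x \<bullet> x = (\<Sum>i\<in>{1..CARD('n)}. (phi i \<bullet> x)\<^sup>2)"
proof -
  have "x \<bullet> x = x \<bullet> (\<Sum>i\<in>{1..CARD('n)}. (phi i \<bullet> x) *\<^sub>R phi i)"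
    by (simp only: basis_expansion)
  then show ?thesis by (simp add: inner_sum_right power2_eq_square inner_commute)
qed

lemma sum_basis_component_products:
  "(\<Sum>i\<in>{1..CARD('n)}. phi i $ j * phi i $ k) = (if j = k then 1 else 0)"
proof -
  have "axis k (1::real) $ j = (\<Sum>i\<in>{1..CARD('n)}. (phi i \<bullet> axis k 1) *\<^sub>R phi i) $ j"
    by (simp only: basis_expansion)
  moreover have "phi i \<bullet> axis k 1 = phi i $ k" for i
    by (simp add: inner_axis)
  ultimately show ?thesis by (simp add: sum_component axis_def mult.commute)
qed

lemma trace_eq_sum_basis: "trace M = (\<Sum>i\<in>{1..CARD('n)}. phi i \<bullet> (M *v phi i))"
proof -
  let ?I = "{1..CARD('n)}"
  have "(\<Sum>i\<in>?I. phi i \<bullet> (M *v phi i))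
      = (\<Sum>i\<in>?I. \<Sum>j\<in>UNIV. \<Sum>k\<in>UNIV. M$j$k * (phi i $ j * phi i $ k))"
    by (simp add: inner_vec_def matrix_vector_mult_def sum_distrib_left algebra_simps)
  also have "\<dots> = (\<Sum>j\<in>UNIV. \<Sum>i\<in>?I. \<Sum>k\<in>UNIV. M$j$k * (phi i $ j * phi i $ k))"
    by (rule sum.swap)
  also have "\<dots> = (\<Sum>j\<in>UNIV. \<Sum>k\<in>UNIV. \<Sum>i\<in>?I. M$j$k * (phi i $ j * phi i $ k))"
    by (rule sum.cong[OF refl], rule sum.swap)
  also have "\<dots> = (\<Sum>j\<in>UNIV. \<Sum>k\<in>UNIV. M$j$k * (\<Sum>i\<in>?I. phi i $ j * phi i $ k))"
    by (simp add: sum_distrib_left)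
  also have "\<dots> = (\<Sum>j\<in>UNIV. M$j$j)"
    by (simp only: sum_basis_component_products) (simp add: if_distrib cong: if_cong)
  finally show ?thesis by (simp add: trace_def)
qed

lemma sum_sq_entries_eq_sum_basis:
  "(\<Sum>j\<in>UNIV. \<Sum>k\<in>UNIV. (D $ j $ k)\<^sup>2) = (\<Sum>i\<in>{1..CARD('n)}. (D *v phi i) \<bullet> (D *v phi i))"
proof -
  have row: "(D *v phi i) $ j = phi i \<bullet> D $ j" for i j
    by (simp add: matrix_vector_mult_def inner_vec_def mult.commute)
  have "(\<Sum>i\<in>{1..CARD('n)}. (D *v phi i) \<bullet> (D *v phi i))
      = (\<Sum>i\<in>{1..CARD('n)}. \<Sum>j\<in>UNIV. (phi i \<bullet> D $ j)\<^sup>2)"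
    by (simp add: inner_vec_def row power2_eq_square)
  also have "\<dots> = (\<Sum>j\<in>UNIV. \<Sum>i\<in>{1..CARD('n)}. (phi i \<bullet> D $ j)\<^sup>2)"
    by (rule sum.swap)
  also have "\<dots> = (\<Sum>j\<in>UNIV. D $ j \<bullet> D $ j)"
    by (simp add: parseval)
  also have "\<dots> = (\<Sum>j\<in>UNIV. \<Sum>k\<in>UNIV. (D $ j $ k)\<^sup>2)"
    by (simp add: inner_vec_def power2_eq_square)
  finally show ?thesis by simp
qed

definition projector :: "nat \<Rightarrow> real^'n^'n" where
  "projector N = (\<Sum>i = 1..N. outer (phi i) (phi i))"

lemma projector_mult_vec: "projector N *v x = (\<Sum>i=1..N. (phi i \<bullet> x) *\<^sub>R phi i)"
  by (simp add: projector_def sum_matrix_vector_mult outer_mult_vec)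

lemma projector_mult_basis:
  assumes "k \<in> {1..CARD('n)}" "N \<le> CARD('n)"
  shows "projector N *v phi k = (if k \<le> N then phi k else 0)"
proof -
  have "projector N *v phi k = (\<Sum>i = 1..N. if i = k then phi k else 0)"
    unfolding projector_mult_vec
    by (rule sum.cong) (use assms orthonormal[OF _ assms(1)] in auto)
  then show ?thesis using assms by auto
qed

lemma projector_feasible:
  assumes "N \<le> CARD('n)"
  shows "feasible N (projector N)"
proof -
  let ?P = "projector N"
  have quad: "x \<bullet> (?P *v x) = (\<Sum>i=1..N. (phi i \<bullet> x)\<^sup>2)" for x
    by (simp add: projector_mult_vec inner_sum_right power2_eq_square inner_commute)
  have "trace ?P = (\<Sum>i\<in>{1..CARD('n)}. if i \<le> N then 1 else 0)"
    unfolding trace_eq_sum_basis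
    by (rule sum.cong) (use orthonormal projector_mult_basis[OF _ assms] in auto)
  also have "\<dots> = real N"
    using sum_split_at[OF assms, of "\<lambda>i. if i \<le> N then 1 else (0::real)"] by simp
  finally have tr: "trace ?P = real N" .
  have sym: "sym_mat ?P"
    unfolding sym_mat_iff by (simp add: projector_def sum_component outer_def mult.commute)
  have "x \<bullet> ((mat 1 - ?P) *v x) = (\<Sum>i=Suc N..CARD('n). (phi i \<bullet> x)\<^sup>2)" for x
    using sum_split_at[OF assms, of "\<lambda>i. (phi i \<bullet> x)\<^sup>2"]
    by (simp add: matrix_vector_mult_diff_rdistrib inner_diff_right quad parseval[of x])
  then have "loewner_le ?P (mat 1)"
    using sym unfolding loewner_le_def sym_mat_iff by (simp add: mat_def sum_nonneg)
  moreover have "loewner_le 0 ?P"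
    unfolding loewner_le_def using sym quad by (simp add: sum_nonneg)
  ultimately show ?thesis unfolding feasible_def using tr sym by simp
qed

definition occupation :: "real^'n^'n \<Rightarrow> nat \<Rightarrow> real" where
  "occupation P i = phi i \<bullet> (P *v phi i)"

lemma feasible_occupation_bounds:
  assumes "feasible N P" "i \<in> {1..CARD('n)}"
  shows "0 \<le> occupation P i" "occupation P i \<le> 1"
  using feasibleD(2,3)[OF assms(1), of "phi i"] orthonormal[OF assms(2,2)]
  by (simp_all add: occupation_def)

lemma feasible_excess_occupation_eq:
  assumes "feasible N P" "N \<le> CARD('n)"
  shows "(\<Sum>i=Suc N..CARD('n). occupation P i) = (\<Sum>i=1..N. 1 - occupation P i)"
proof -
  have "(\<Sum>i\<in>{1..CARD('n)}. occupation P i) = real N"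
    using feasibleD(4)[OF assms(1)] by (simp add: trace_eq_sum_basis occupation_def)
  then show ?thesis
    using sum_split_at[OF assms(2), of "occupation P"] by (simp add: sum_subtractf)
qed

lemma feasible_frob_norm_sq_le:
  assumes feas: "feasible N P" and NI: "N \<le> CARD('n)"
  shows "(frob_norm (P - projector N))\<^sup>2 \<le> 2 * (\<Sum>i=Suc N..CARD('n). occupation P i)"
proof -
  let ?D = "P - projector N"
  let ?e = "\<lambda>i. (?D *v phi i) \<bullet> (?D *v phi i)"
  have Dv: "?D *v phi i = P *v phi i - (if i \<le> N then phi i else 0)"
    if "i \<in> {1..CARD('n)}" for i
    using projector_mult_basis[OF that NI] by (simp add: matrix_vector_mult_diff_rdistrib)
  have low: "?e i \<le> 1 - occupation P i" if "i \<in> {1..N}" for i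
  proof -
    have i: "i \<in> {1..CARD('n)}" using that NI by auto
    have "(P *v phi i) \<bullet> phi i = occupation P i" by (simp add: occupation_def inner_commute)
    then show ?thesis
      using feasible_inner_mult_vec_le[OF feas, of "phi i"] orthonormal[OF i i] that Dv[OF i]
      by (simp add: inner_diff_left inner_diff_right inner_commute occupation_def)
  qed
  have high: "?e i \<le> occupation P i" if "i \<in> {Suc N..CARD('n)}" for i
    using feasible_inner_mult_vec_le[OF feas, of "phi i"] that Dv[of i]
    by (simp add: occupation_def)
  have "(frob_norm ?D)\<^sup>2 = (\<Sum>i\<in>{1..CARD('n)}. ?e i)"
    unfolding frob_norm_def sum_sq_entries_eq_sum_basis by (simp add: sum_nonneg)
  also have "\<dots> \<le> (\<Sum>i=1..N. 1 - occupation P i) + (\<Sum>i=Suc N..CARD('n). occupation P i)"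
    unfolding sum_split_at[OF NI] by (intro add_mono sum_mono low high)
  finally show ?thesis using feasible_excess_occupation_eq[OF feas NI] by simp
qed

end

locale eigenbasis = orthonormal_basis phi for phi :: "nat \<Rightarrow> real^'n" +
  fixes H :: "real^'n^'n" and lam :: "nat \<Rightarrow> real"
  assumes sym_H: "sym_mat H"
    and eigen: "\<And>i. i \<in> {1..CARD('n)} \<Longrightarrow> H *v phi i = lam i *\<^sub>R phi i"
    and sorted: "\<And>i j. i \<in> {1..CARD('n)} \<Longrightarrow> j \<in> {1..CARD('n)} \<Longrightarrow> i \<le> j \<Longrightarrow> lam i \<le> lam j"
begin

lemma energy_eq_sum_occupation:
  "energy H P = (\<Sum>i\<in>{1..CARD('n)}. lam i * occupation P i)"
  unfolding energy_def trace_eq_sum_basis occupation_def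
proof (rule sum.cong[OF refl])
  fix i assume i: "i \<in> {1..CARD('n)}"
  have "phi i \<bullet> ((H ** P) *v phi i) = (H *v phi i) \<bullet> (P *v phi i)"
    by (simp add: matrix_vector_mul_assoc sym_mat_inner_commute[OF sym_H])
  then show "phi i \<bullet> ((H ** P) *v phi i) = lam i * (phi i \<bullet> (P *v phi i))"
    by (simp add: eigen[OF i])
qed

lemma energy_projector:
  assumes "N \<le> CARD('n)"
  shows "energy H (projector N) = (\<Sum>i=1..N. lam i)"
proof -
  have "energy H (projector N) = (\<Sum>i\<in>{1..CARD('n)}. if i \<le> N then lam i else 0)"
    unfolding energy_eq_sum_occupation occupation_def
    by (rule sum.cong) (use orthonormal projector_mult_basis[OF _ assms] in auto)
  then show ?thesis
    using sum_split_at[OF assms, of "\<lambda>i. if i \<le> N then lam i else 0"] by simp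
qed

lemma gap_mult_excess_occupation_le:
  assumes feas: "feasible N P" and "N < CARD('n)"
  shows "(lam (N + 1) - lam N) * (\<Sum>i=Suc N..CARD('n). occupation P i)
           \<le> energy H P - energy H (projector N)"
proof -
  have NI: "N \<le> CARD('n)" using assms by simp
  let ?d = "occupation P"
  let ?s = "\<Sum>i=Suc N..CARD('n). ?d i"
  have "lam i * (1 - ?d i) \<le> lam N * (1 - ?d i)" if "i \<in> {1..N}" for i
    using that assms sorted[of i N] feasible_occupation_bounds(2)[OF feas, of i]
    by (intro mult_right_mono) auto
  then have "(\<Sum>i=1..N. lam i * (1 - ?d i)) \<le> lam N * ?s"
    unfolding feasible_excess_occupation_eq[OF feas NI] sum_distrib_left by (rule sum_mono)
  moreover have "lam (N + 1) * ?s \<le> (\<Sum>i=Suc N..CARD('n). lam i * ?d i)"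
    unfolding sum_distrib_left
    using assms sorted[of "N + 1"] feasible_occupation_bounds(1)[OF feas]
    by (intro sum_mono mult_right_mono) auto
  moreover have "energy H P - energy H (projector N)
      = (\<Sum>i=Suc N..CARD('n). lam i * ?d i) - (\<Sum>i=1..N. lam i * (1 - ?d i))"
    unfolding energy_projector[OF NI] energy_eq_sum_occupation[of P] sum_split_at[OF NI]
    by (simp add: algebra_simps sum_subtractf)
  ultimately show ?thesis by (simp add: algebra_simps)
qed

end

theorem theorem1:
  fixes H :: "real^'n^'n" and lam :: "nat \<Rightarrow> real" and phi :: "nat \<Rightarrow> real^'n"
    and N :: nat and Peta :: "real \<Rightarrow> real^'n^'n"
  assumes symH: "sym_mat H"
    and eig: "\<And>i. i \<in> {1..CARD('n)} \<Longrightarrow> H *v phi i = lam i *\<^sub>R phi i"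
    and orth: "\<And>i j. i \<in> {1..CARD('n)} \<Longrightarrow> j \<in> {1..CARD('n)} \<Longrightarrow>
                 phi i \<bullet> phi j = (if i = j then 1 else 0)"
    and sorted: "\<And>i j. i \<in> {1..CARD('n)} \<Longrightarrow> j \<in> {1..CARD('n)} \<Longrightarrow> i \<le> j \<Longrightarrow> lam i \<le> lam j"
    and Npos: "1 \<le> N" and Nlt: "N < CARD('n)"
    and gap: "lam N < lam (N + 1)"
    and minim: "\<And>\<eta>. \<eta> > 0 \<Longrightarrow> is_l1_minimizer H N \<eta> (Peta \<eta>)"
  defines "P0 \<equiv> (\<Sum>i = 1..N. outer (phi i) (phi i))"
  shows "(\<forall>\<eta>>0. 0 \<le> energy H (Peta \<eta>) - energy H P0 \<and>
                 energy H (Peta \<eta>) - energy H P0 \<le> l1_norm P0 / \<eta>)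
       \<and> (\<forall>\<eta>>0. (frob_norm (Peta \<eta> - P0))^2 \<le> (2 / \<eta>) * (l1_norm P0 / (lam (N + 1) - lam N)))
       \<and> ((\<lambda>\<eta>. energy H (Peta \<eta>)) \<longlongrightarrow> energy H P0) at_top
       \<and> ((\<lambda>\<eta>. frob_norm (Peta \<eta> - P0)) \<longlongrightarrow> 0) at_top"
proof -
  interpret eigenbasis phi H lam using orth symH eig sorted by unfold_locales
  have NI: "N \<le> CARD('n)" using Nlt by simp
  have P0: "P0 = projector N" by (simp add: P0_def projector_def)
  let ?g = "lam (N + 1) - lam N" and ?C = "l1_norm P0"
  have bounds: "0 \<le> energy H (Peta \<eta>) - energy H P0 \<and>
                energy H (Peta \<eta>) - energy H P0 \<le> ?C / \<eta> \<and>
                (frob_norm (Peta \<eta> - P0))\<^sup>2 \<le> (2 / \<eta>) * (?C / ?g)" if "0 < \<eta>" for \<eta>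
  proof -
    have feas: "feasible N (Peta \<eta>)" using minim[OF that] unfolding is_l1_minimizer_def by blast
    define s where "s = (\<Sum>i=Suc N..CARD('n). occupation (Peta \<eta>) i)"
    have "0 \<le> s" unfolding s_def using feasible_occupation_bounds(1)[OF feas]
      by (intro sum_nonneg) auto
    have gs: "?g * s \<le> energy H (Peta \<eta>) - energy H P0"
      unfolding s_def P0 by (rule gap_mult_excess_occupation_le[OF feas Nlt])
    have excess: "energy H (Peta \<eta>) - energy H P0 \<le> ?C / \<eta>"
      using l1_minimizer_energy_excess_le[OF minim[OF that] that] projector_feasible[OF NI] P0
      by simp
    have "(frob_norm (Peta \<eta> - P0))\<^sup>2 \<le> 2 * s"
      unfolding s_def P0 by (rule feasible_frob_norm_sq_le[OF feas NI])
    moreover have "s \<le> (?C / \<eta>) / ?g"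
      using gs excess gap by (subst pos_le_divide_eq) (auto simp: mult.commute)
    moreover have "0 \<le> ?g * s" using gap \<open>0 \<le> s\<close> by simp
    ultimately show ?thesis using gs excess by simp
  qed
  have "((\<lambda>\<eta>. energy H (Peta \<eta>)) \<longlongrightarrow> energy H P0) at_top"
    using bounds by (intro LIM_zero_cancel[OF tendsto_zero_if_le_inverse]) blast
  moreover have "((\<lambda>\<eta>. (frob_norm (Peta \<eta> - P0))\<^sup>2) \<longlongrightarrow> 0) at_top"
    using bounds by (intro tendsto_zero_if_le_inverse[where C = "2 * (?C / ?g)"])
      (auto simp: mult.commute)
  then have "((\<lambda>\<eta>. frob_norm (Peta \<eta> - P0)) \<longlongrightarrow> 0) at_top"
    using tendsto_real_sqrt[of "\<lambda>\<eta>. (frob_norm (Peta \<eta> - P0))\<^sup>2" 0 at_top]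
    by (simp add: frob_norm_nonneg)
  ultimately show ?thesis using bounds by blast
qed

end
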